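(* Let $\ell\in\mathbb{N}$, $\alpha\in(0,1)\cup(1,2)$, $p\in(0,1)$. Let $C_1>0$ be a constant such that $\Re(y^{\alpha,p}_\gamma(t))\le-C_1|t|^\alpha$ and $|y^{\alpha,p}_\gamma(t)|\le C_1|t|^\alpha$ for all $\gamma\in(q,1]$, $t\in\mathbb{R}$, and let $C_2>0$ be such that $|x_n^{\alpha,p}(t)|/n\le\frac12$ for all $n$ and $|t|\le C_2n^{1/\alpha}$. Then there exist $C_{4,\ell}^{\alpha,p}>0$ and $\varepsilon\in(0,C_2]$ such that for all $n\in\mathbb{N}$ and $|t|\le\varepsilon n^{1/\alpha}$, \[|R^{\alpha,p}_{n,2,\ell}(t)|\le\begin{cases}C_{4,\ell}^{\alpha,p}\,|t|^{2\ell\alpha}e^{C_1|t|^\alpha/2}\,n^{-\ell}, & 0<\alpha<1,\\ C_{4,\ell}^{\alpha,p}\,|t|^{2\ell}e^{C_1|t|^\alpha/2}\,n^{-\ell(2-\alpha)/\alpha}, & 1<\alpha<2.\end{cases}\]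
   Context: Let $p\in(0,1)$, $q=1-p$, $r=1/q$. $\mathbf{f}_{\alpha,p}(t)=\sum_{k\ge1}e^{\mathrm{i}tr^{k/\alpha}}q^{k-1}p$, $x_n^{\alpha,p}(t)=n(\mathbf{f}_{\alpha,p}(t/n^{1/\alpha})-1)$, $\gamma_n=n/r^{\lceil\log_rn\rceil}$. For $\gamma\in(q,1]$: if $\alpha\in(0,1)$, $y_\gamma^{\alpha,p}(t)=\sum_{k\in\mathbb{Z}}(\exp\{\mathrm{i}tr^{k/\alpha}/\gamma^{1/\alpha}\}-1)\frac{p\gamma}{qr^k}$; if $\alpha\in(1,2)$, $y_\gamma^{\alpha,p}(t)=\sum_{k\in\mathbb{Z}}(\exp\{\mathrm{i}tr^{k/\alpha}/\gamma^{1/\alpha}\}-1-\mathrm{i}tr^{k/\alpha}/\gamma^{1/\alpha})\frac{p\gamma}{qr^k}$ (constants $C_1,C_2$ as in the claim exist). Define $R^{\alpha,p}_{n,1,2}(t)=-\sum_{m=\lceil\log_rn\rceil}^\infty\big(\exp\{\mathrm{i}t/(r^{m/\alpha}\gamma_n^{1/\alpha})\}-1-\mathrm{i}t/(r^{m/\alpha}\gamma_n^{1/\alpha})\big)\frac{p\gamma_n}{q}r^m$; for $|t|\le C_2n^{1/\alpha}$, $R^{\alpha,p}_{n,3,2}(t)=\sum_{j\ge2}\frac{(-1)^{j+1}}{j}\frac{[x_n^{\alpha,p}(t)]^j}{n^{j-1}}$ and $R^{\alpha,p}_{n,2,\ell}(t)=\sum_{j=\ell}^\infty\frac1{j!}[R^{\alpha,p}_{n,1,2}(t)+R^{\alpha,p}_{n,3,2}(t)]^j$.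 *)

theory Defs
  imports "HOL-Analysis.Analysis"
begin

definition qq :: "real \<Rightarrow> real" where "qq p = 1 - p"
definition rr :: "real \<Rightarrow> real" where "rr p = 1 / (1 - p)"

text \<open>f_{alpha,p}(t) = sum_{k>=1} exp(i t r^(k/alpha)) q^(k-1) p  (index shifted k = j+1)\<close>
definition fchar :: "real \<Rightarrow> real \<Rightarrow> real \<Rightarrow> complex" where
  "fchar alpha p t = (\<Sum>j. exp (\<i> * complex_of_real (t * rr p powr (real (j + 1) / alpha)))
                          * complex_of_real (qq p ^ j * p))"

definition xn :: "real \<Rightarrow> real \<Rightarrow> nat \<Rightarrow> real \<Rightarrow> complex" where
  "xn alpha p n t = of_nat n * (fchar alpha p (t / real n powr (1 / alpha)) - 1)"

definition Mn :: "real \<Rightarrow> nat \<Rightarrow> int" where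
  "Mn p n = \<lceil>log (rr p) (real n)\<rceil>"

definition gam :: "real \<Rightarrow> nat \<Rightarrow> real" where
  "gam p n = real n / rr p powr real_of_int (Mn p n)"

definition ygam :: "real \<Rightarrow> real \<Rightarrow> real \<Rightarrow> real \<Rightarrow> complex" where
  "ygam alpha p g t =
     (if alpha < 1 then
        (\<Sum>\<^sub>\<infinity>k::int. (exp (\<i> * complex_of_real (t * rr p powr (real_of_int k / alpha) / g powr (1 / alpha))) - 1)
                      * complex_of_real (p * g / (qq p * rr p powr real_of_int k)))
      else
        (\<Sum>\<^sub>\<infinity>k::int. (exp (\<i> * complex_of_real (t * rr p powr (real_of_int k / alpha) / g powr (1 / alpha))) - 1
                        - \<i> * complex_of_real (t * rr p powr (real_of_int k / alpha) / g powr (1 / alpha)))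
                      * complex_of_real (p * g / (qq p * rr p powr real_of_int k))))"

text \<open>R_{n,1,2}: sum over integers m >= ceiling(log_r n) (written m = Mn + j)\<close>
definition R12 :: "real \<Rightarrow> real \<Rightarrow> nat \<Rightarrow> real \<Rightarrow> complex" where
  "R12 alpha p n t =
     - (\<Sum>j. (let m = real_of_int (Mn p n) + real j;
                  u = t / (rr p powr (m / alpha) * gam p n powr (1 / alpha))
              in (exp (\<i> * complex_of_real u) - 1 - \<i> * complex_of_real u)
                 * complex_of_real (p * gam p n / qq p * rr p powr m)))"

definition R32 :: "real \<Rightarrow> real \<Rightarrow> nat \<Rightarrow> real \<Rightarrow> complex" where
  "R32 alpha p n t =
     (\<Sum>j. complex_of_real ((-1) ^ (j + 3) / real (j + 2))
           * (xn alpha p n t) ^ (j + 2) / of_nat n ^ (j + 1))"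

definition R2 :: "real \<Rightarrow> real \<Rightarrow> nat \<Rightarrow> nat \<Rightarrow> real \<Rightarrow> complex" where
  "R2 alpha p n l t =
     (\<Sum>j. (R12 alpha p n t + R32 alpha p n t) ^ (j + l) / of_nat (fact (j + l)))"

end

theory Submission
  imports Defs "HOL-Probability.Characteristic_Functions"
begin

(* With z = R_{n,1,2}(t) + R_{n,3,2}(t), R_{n,2,l}(t) is the tail of the exponential series of z,
   so |R_{n,2,l}(t)| <= |z|^l e^|z|.  The Taylor bound |e^(iu) - 1 - iu| <= u^2/2 summed against a
   geometric series gives |R_{n,1,2}(t)| <~ t^2 n^(1-2/alpha); the logarithm remainder gives
   |R_{n,3,2}(t)| <~ |x_n(t)|^2/n = n |f(s) - 1|^2 with s = t/n^(1/alpha), and |f(s) - 1| <~ |s|^alpha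
   for alpha < 1, <~ |s| for alpha > 1.  Hence |z| <~ b with b = |t|^(2 alpha)/n resp.
   b = t^2 n^(1-2/alpha).  On |t| <= eps n^(1/alpha) one has b <= eps^alpha |t|^alpha resp.
   b <= eps^(2-alpha) |t|^alpha, so for small eps the factor e^|z| is at most e^(C1 |t|^alpha/2),
   and b^l is the claimed power of |t| and n. *)

lemma norm_suminf_le_geometric:
  fixes f :: "nat \<Rightarrow> 'a::banach"
  assumes f: "\<And>j. norm (f j) \<le> C * \<rho> ^ j" and \<rho>: "0 \<le> \<rho>" "\<rho> < 1"
  shows "summable (\<lambda>j. norm (f j))" and "norm (suminf f) \<le> C / (1 - \<rho>)"
proof -
  have gs: "(\<lambda>j. C * \<rho> ^ j) sums (C / (1 - \<rho>))"
    using sums_mult[OF geometric_sums, of \<rho> C] \<rho> by simp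
  show sn: "summable (\<lambda>j. norm (f j))"
    by (rule summable_comparison_test[OF _ sums_summable[OF gs]]) (use f in auto)
  have "norm (suminf f) \<le> (\<Sum>j. norm (f j))" using summable_norm[OF sn] .
  also have "\<dots> \<le> (\<Sum>j. C * \<rho> ^ j)" by (rule suminf_le[OF f sn sums_summable[OF gs]])
  also have "\<dots> = C / (1 - \<rho>)" using sums_unique[OF gs] by simp
  finally show "norm (suminf f) \<le> C / (1 - \<rho>)" .
qed

lemma norm_exp_series_tail_le:
  fixes z :: "'a::{real_normed_field, banach}"
  shows "norm (\<Sum>j. z ^ (j + l) / of_nat (fact (j + l))) \<le> norm z ^ l * exp (norm z)"
proof -
  define f where "f = (\<lambda>j. z ^ (j + l) / of_nat (fact (j + l)))"
  have es: "(\<lambda>j. norm z ^ l * (norm z ^ j / fact j)) sums (norm z ^ l * exp (norm z))"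
    by (intro sums_mult) (use exp_converges[of "norm z"] in \<open>simp add: divide_inverse mult.commute\<close>)
  have fb: "norm (f j) \<le> norm z ^ l * (norm z ^ j / fact j)" for j
  proof -
    have "norm (f j) = norm z ^ l * norm z ^ j / fact (j + l)"
      unfolding f_def by (simp add: norm_divide norm_mult norm_power power_add mult_ac)
    also have "\<dots> \<le> norm z ^ l * norm z ^ j / fact j"
      by (intro divide_left_mono) (auto simp: fact_mono)
    finally show ?thesis by simp
  qed
  have sn: "summable (\<lambda>j. norm (f j))"
    by (rule summable_comparison_test[OF _ sums_summable[OF es]]) (use fb in auto)
  have "norm (suminf f) \<le> (\<Sum>j. norm (f j))" using summable_norm[OF sn] .
  also have "\<dots> \<le> (\<Sum>j. norm z ^ l * (norm z ^ j / fact j))"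
    by (rule suminf_le[OF fb sn sums_summable[OF es]])
  also have "\<dots> = norm z ^ l * exp (norm z)" using sums_unique[OF es] by simp
  finally show ?thesis unfolding f_def .
qed

lemma sum_power_inj_le:
  fixes \<rho> :: real
  assumes "0 \<le> \<rho>" "\<rho> < 1" "finite S" "inj_on h S"
  shows "(\<Sum>j\<in>S. \<rho> ^ h j) \<le> 1 / (1 - \<rho>)"
proof -
  have "(\<Sum>j\<in>S. \<rho> ^ h j) = (\<Sum>i\<in>h ` S. \<rho> ^ i)"
    using sum.reindex[OF assms(4), of "\<lambda>i. \<rho> ^ i"] by simp
  also have "\<dots> \<le> (\<Sum>i. \<rho> ^ i)"
    by (rule sum_le_suminf) (use assms in auto)
  also have "\<dots> = 1 / (1 - \<rho>)" using assms by (simp add: suminf_geometric)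
  finally show ?thesis .
qed

lemma sum_powr_abs_diff_le:
  fixes \<rho> \<tau> :: real
  assumes "0 < \<rho>" "\<rho> < 1"
  shows "(\<Sum>j<N. \<rho> powr \<bar>real j - \<tau>\<bar>) \<le> 2 / (1 - \<rho>)"
proof -
  define A where "A = {j\<in>{..<N}. real j \<le> \<tau>}"
  define B where "B = {j\<in>{..<N}. \<not> real j \<le> \<tau>}"
  have fin: "finite A" "finite B" by (auto simp: A_def B_def)
  have "(\<Sum>j<N. \<rho> powr \<bar>real j - \<tau>\<bar>)
      = (\<Sum>j\<in>A. \<rho> powr \<bar>real j - \<tau>\<bar>) + (\<Sum>j\<in>B. \<rho> powr \<bar>real j - \<tau>\<bar>)"
  proof -
    have "{..<N} = A \<union> B" "A \<inter> B = {}" by (auto simp: A_def B_def)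
    then show ?thesis using fin by (simp add: sum.union_disjoint)
  qed
  also have "(\<Sum>j\<in>A. \<rho> powr \<bar>real j - \<tau>\<bar>) \<le> 1 / (1 - \<rho>)"
  proof -
    define k where "k = nat \<lfloor>\<tau>\<rfloor>"
    have jk: "j \<le> k" "real (k - j) \<le> \<tau> - real j" if "j \<in> A" for j
      using that unfolding A_def k_def by (auto simp: le_nat_iff le_floor_iff of_nat_diff)
    have "(\<Sum>j\<in>A. \<rho> powr \<bar>real j - \<tau>\<bar>) \<le> (\<Sum>j\<in>A. \<rho> ^ (k - j))"
    proof (rule sum_mono)
      fix j assume j: "j \<in> A"
      then have "\<bar>real j - \<tau>\<bar> = \<tau> - real j" by (auto simp: A_def)
      then show "\<rho> powr \<bar>real j - \<tau>\<bar> \<le> \<rho> ^ (k - j)"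
        using assms jk[OF j] by (simp add: powr_realpow[symmetric] powr_mono')
    qed
    also have "\<dots> \<le> 1 / (1 - \<rho>)"
      using assms fin by (intro sum_power_inj_le) (auto simp: inj_on_def, metis diff_diff_cancel jk(1))
    finally show ?thesis .
  qed
  also have "(\<Sum>j\<in>B. \<rho> powr \<bar>real j - \<tau>\<bar>) \<le> 1 / (1 - \<rho>)"
  proof -
    define m where "m = nat (\<lfloor>\<tau>\<rfloor> + 1)"
    have jm: "m \<le> j" "real (j - m) \<le> real j - \<tau>" if "j \<in> B" for j
      using that unfolding B_def m_def by (auto simp: nat_le_iff of_nat_diff) linarith+
    have "(\<Sum>j\<in>B. \<rho> powr \<bar>real j - \<tau>\<bar>) \<le> (\<Sum>j\<in>B. \<rho> ^ (j - m))"
    proof (rule sum_mono)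
      fix j assume j: "j \<in> B"
      then have "\<bar>real j - \<tau>\<bar> = real j - \<tau>" by (auto simp: B_def)
      then show "\<rho> powr \<bar>real j - \<tau>\<bar> \<le> \<rho> ^ (j - m)"
        using assms jm[OF j] by (simp add: powr_realpow[symmetric] powr_mono')
    qed
    also have "\<dots> \<le> 1 / (1 - \<rho>)"
      using assms fin by (intro sum_power_inj_le) (auto simp: inj_on_def, metis le_add_diff_inverse jm(1))
    finally show ?thesis .
  qed
  finally show ?thesis by simp
qed

lemma norm_iexp_sub_one_le: "cmod (exp (\<i> * complex_of_real x) - 1) \<le> min 2 \<bar>x\<bar>"
proof -
  have "cmod (exp (\<i> * complex_of_real x) - 1) \<le> \<bar>x\<bar>"
    using iexp_approx1[of x 0] by simp
  moreover have "cmod (exp (\<i> * complex_of_real x) - 1) \<le> 2"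
    using norm_triangle_ineq4[of "exp (\<i> * complex_of_real x)" 1] by (simp add: norm_exp_i_times)
  ultimately show ?thesis by simp
qed

lemma norm_iexp_sub_one_sub_le:
  "cmod (exp (\<i> * complex_of_real x) - 1 - \<i> * complex_of_real x) \<le> x\<^sup>2 / 2"
  using iexp_approx1[of x 1] by (simp add: diff_diff_eq power2_eq_square)

lemma rr_gt_one: "0 < p \<Longrightarrow> p < 1 \<Longrightarrow> rr p > 1"
  by (simp add: rr_def)

lemma qq_eq_inverse_rr: "p < 1 \<Longrightarrow> qq p = 1 / rr p"
  by (simp add: rr_def qq_def)

definition fchar_sub_one_term :: "real \<Rightarrow> real \<Rightarrow> real \<Rightarrow> nat \<Rightarrow> complex" where
  "fchar_sub_one_term \<alpha> p s j = (exp (\<i> * complex_of_real (s * rr p powr (real (j + 1) / \<alpha>))) - 1)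
                          * complex_of_real (qq p ^ j * p)"

lemma norm_fchar_sub_one_term_le:
  assumes "0 < p" "p < 1"
  shows "cmod (fchar_sub_one_term \<alpha> p s j) \<le> p * min 2 (\<bar>s\<bar> * rr p powr (real (j + 1) / \<alpha>)) * (1 / rr p) ^ j"
proof -
  have "cmod (fchar_sub_one_term \<alpha> p s j)
      = cmod (exp (\<i> * complex_of_real (s * rr p powr (real (j + 1) / \<alpha>))) - 1) * (qq p ^ j * p)"
    using assms by (simp add: fchar_sub_one_term_def norm_mult qq_def del: of_real_mult)
  also have "\<dots> \<le> min 2 \<bar>s * rr p powr (real (j + 1) / \<alpha>)\<bar> * (qq p ^ j * p)"
    by (intro mult_right_mono norm_iexp_sub_one_le) (use assms in \<open>auto simp: qq_def\<close>)
  finally show ?thesis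
    using assms by (simp add: qq_eq_inverse_rr abs_mult mult_ac)
qed

lemma fchar_sub_one_eq_suminf:
  assumes p: "0 < p" "p < 1"
  shows "summable (\<lambda>j. cmod (fchar_sub_one_term \<alpha> p s j))"
    and "fchar \<alpha> p s - 1 = (\<Sum>j. fchar_sub_one_term \<alpha> p s j)"
proof -
  have "cmod (fchar_sub_one_term \<alpha> p s j) \<le> 2 * p * qq p ^ j" for j
  proof -
    have "p * min 2 (\<bar>s\<bar> * rr p powr (real (j + 1) / \<alpha>)) * (1 / rr p) ^ j \<le> p * 2 * (1 / rr p) ^ j"
      using p rr_gt_one[OF p] by (intro mult_right_mono mult_left_mono) auto
    moreover have "2 * p * qq p ^ j = p * 2 * (1 / rr p) ^ j"
      using p by (simp add: qq_eq_inverse_rr)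
    ultimately show ?thesis
      using norm_fchar_sub_one_term_le[OF p, of \<alpha> s j] by linarith
  qed
  then show sn: "summable (\<lambda>j. cmod (fchar_sub_one_term \<alpha> p s j))"
    using p by (intro norm_suminf_le_geometric[where \<rho> = "qq p"]) (auto simp: qq_def)
  have "(\<lambda>j. qq p ^ j * p) sums (1 / (1 - qq p) * p)"
    using p by (intro sums_mult2 geometric_sums) (auto simp: qq_def)
  then have weights: "(\<lambda>j. complex_of_real (qq p ^ j * p)) sums 1"
    using p sums_of_real by (fastforce simp: qq_def)
  have "(\<lambda>j. fchar_sub_one_term \<alpha> p s j + complex_of_real (qq p ^ j * p)) sums ((\<Sum>j. fchar_sub_one_term \<alpha> p s j) + 1)"
    by (intro sums_add summable_sums weights summable_norm_cancel[OF sn])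
  then have "fchar \<alpha> p s = (\<Sum>j. fchar_sub_one_term \<alpha> p s j) + 1"
    unfolding fchar_def fchar_sub_one_term_def by (simp add: algebra_simps sums_iff)
  then show "fchar \<alpha> p s - 1 = (\<Sum>j. fchar_sub_one_term \<alpha> p s j)" by simp
qed

lemma min_two_exp_mult_exp_le:
  fixes L \<alpha> d :: real
  assumes "L > 0" "0 < \<alpha>" "\<alpha> < 1"
  shows "min 2 (exp (d * L / \<alpha>)) * exp (- d * L) \<le> 2 * exp (- min 1 (1/\<alpha> - 1) * L * \<bar>d\<bar>)"
proof (cases "d \<ge> 0")
  case True
  have "min 1 (1/\<alpha> - 1) * L * d \<le> 1 * L * d"
    using True assms by (intro mult_right_mono) auto
  then have "exp (- d * L) \<le> exp (- min 1 (1/\<alpha> - 1) * L * \<bar>d\<bar>)"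
    using True by (simp add: mult_ac)
  then show ?thesis
    by (intro mult_mono) auto
next
  case False
  have "(1/\<alpha> - 1) * L * (-d) \<ge> min 1 (1/\<alpha> - 1) * L * (-d)"
    using False assms by (intro mult_right_mono) auto
  then have "exp (d * L / \<alpha>) * exp (- d * L) \<le> exp (- min 1 (1/\<alpha> - 1) * L * \<bar>d\<bar>)"
    using False by (simp add: exp_add[symmetric] algebra_simps)
  moreover have "min 2 (exp (d * L / \<alpha>)) * exp (- d * L) \<le> exp (d * L / \<alpha>) * exp (- d * L)"
    by (intro mult_right_mono) auto
  ultimately show ?thesis
    using exp_ge_zero[of "- min 1 (1/\<alpha> - 1) * L * \<bar>d\<bar>"] by linarith
qed

text \<open>For \<open>\<alpha> < 1\<close> the terms of \<open>f(s) - 1\<close> grow geometrically in \<open>j\<close> up to the index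
  \<open>\<tau> \<approx> -\<alpha> log\<^sub>r \<bar>s\<bar>\<close> where \<open>\<bar>s\<bar> r\<^bsup>j/\<alpha>\<^esup>\<close> reaches 1, and decay geometrically after it; the
  peak has size \<open>\<bar>s\<bar>\<^sup>\<alpha>\<close>.\<close>
lemma min_powr_mult_power_le:
  fixes r \<alpha> \<sigma> :: real and j :: nat
  assumes r: "r > 1" and a: "0 < \<alpha>" "\<alpha> < 1" and s: "\<sigma> > 0"
  shows "min 2 (\<sigma> * r powr (real (j + 1) / \<alpha>)) * (1 / r) ^ j
     \<le> 2 * r * \<sigma> powr \<alpha> * (r powr (- min 1 (1/\<alpha> - 1))) powr \<bar>real j - (- 1 - \<alpha> * log r \<sigma>)\<bar>"
proof -
  define L where "L = ln r"
  have L: "L > 0" using r by (simp add: L_def)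
  define \<tau> where "\<tau> = - 1 - \<alpha> * log r \<sigma>"
  define d where "d = real j - \<tau>"
  define c where "c = min 1 (1/\<alpha> - 1)"
  have ls: "ln \<sigma> = log r \<sigma> * L" using r s by (simp add: L_def log_def)
  have "\<sigma> * r powr (real (j + 1) / \<alpha>) = exp (log r \<sigma> * L) * exp (real (j+1)/\<alpha> * L)"
    using r s ls by (simp add: powr_def L_def) (metis exp_ln)
  also have "\<dots> = exp (d * L / \<alpha>)" unfolding d_def \<tau>_def using a
    by (simp add: exp_add[symmetric] field_simps)
  finally have e1: "\<sigma> * r powr (real (j + 1) / \<alpha>) = exp (d * L / \<alpha>)" .
  have e2: "(1 / r) ^ j = exp (- d * L) * exp (- \<tau> * L)"
  proof -
    have "(1 / r) ^ j = inverse (exp (real j * L))"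
      using r by (simp add: exp_of_nat_mult L_def power_inverse divide_inverse)
    also have "\<dots> = exp (- d * L) * exp (- \<tau> * L)" unfolding d_def
      by (simp add: exp_add[symmetric] exp_minus[symmetric] algebra_simps)
    finally show ?thesis .
  qed
  have e3: "r * \<sigma> powr \<alpha> = exp (- \<tau> * L)"
    using r s a unfolding \<tau>_def powr_def by (simp add: ls exp_add L_def field_simps)
  have e4: "(r powr (- c)) powr \<bar>d\<bar> = exp (- c * L * \<bar>d\<bar>)"
    using r unfolding powr_def by (simp add: L_def)
  have "min 2 (\<sigma> * r powr (real (j + 1) / \<alpha>)) * (1 / r) ^ j
      = (min 2 (exp (d * L / \<alpha>)) * exp (- d * L)) * exp (- \<tau> * L)"
    by (simp only: e1 e2 mult.assoc)
  also have "\<dots> \<le> (2 * exp (- c * L * \<bar>d\<bar>)) * exp (- \<tau> * L)"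
    unfolding c_def by (intro mult_right_mono min_two_exp_mult_exp_le) (use L a in auto)
  also have "\<dots> = 2 * (r * \<sigma> powr \<alpha>) * (r powr (- c)) powr \<bar>d\<bar>"
    by (simp add: e3 e4)
  finally show ?thesis unfolding d_def \<tau>_def c_def by simp
qed

lemma fchar_sub_one_le_powr:
  assumes p: "0 < p" "p < 1" and a: "0 < \<alpha>" "\<alpha> < 1"
  obtains K where "\<And>s. cmod (fchar \<alpha> p s - 1) \<le> K * \<bar>s\<bar> powr \<alpha>"
proof
  define r where "r = rr p"
  have r: "r > 1" using rr_gt_one[OF p] by (simp add: r_def)
  define \<rho> where "\<rho> = r powr (- min 1 (1/\<alpha> - 1))"
  have "min 1 (1/\<alpha> - 1) > 0" using a by (simp add: field_simps)
  then have \<rho>: "0 < \<rho>" "\<rho> < 1" using r unfolding \<rho>_def by (auto intro: powr_less_one)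
  fix s :: real
  note dev = fchar_sub_one_eq_suminf[OF p, of \<alpha> s]
  have "cmod (fchar \<alpha> p s - 1) \<le> (\<Sum>j. cmod (fchar_sub_one_term \<alpha> p s j))"
    unfolding dev(2) using summable_norm[OF dev(1)] .
  also have "\<dots> \<le> (4 * r * p / (1 - \<rho>)) * \<bar>s\<bar> powr \<alpha>"
  proof (cases "s = 0")
    case True
    then show ?thesis by (simp add: fchar_sub_one_term_def)
  next
    case False
    define \<tau> where "\<tau> = - 1 - \<alpha> * log r \<bar>s\<bar>"
    show ?thesis
    proof (rule suminf_le_const[OF dev(1)])
      fix N
      have "(\<Sum>j<N. cmod (fchar_sub_one_term \<alpha> p s j)) \<le> (\<Sum>j<N. p * (2 * r * \<bar>s\<bar> powr \<alpha> * \<rho> powr \<bar>real j - \<tau>\<bar>))"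
      proof (rule sum_mono)
        fix j
        show "cmod (fchar_sub_one_term \<alpha> p s j) \<le> p * (2 * r * \<bar>s\<bar> powr \<alpha> * \<rho> powr \<bar>real j - \<tau>\<bar>)"
          using norm_fchar_sub_one_term_le[OF p, of \<alpha> s j] min_powr_mult_power_le[OF r a, of "\<bar>s\<bar>" j] p False
          unfolding \<tau>_def \<rho>_def r_def by (simp add: mult.assoc) (meson mult_left_mono less_imp_le order_trans)
      qed
      also have "\<dots> = p * (2 * r * \<bar>s\<bar> powr \<alpha>) * (\<Sum>j<N. \<rho> powr \<bar>real j - \<tau>\<bar>)"
        by (simp add: sum_distrib_left mult_ac)
      also have "\<dots> \<le> p * (2 * r * \<bar>s\<bar> powr \<alpha>) * (2 / (1 - \<rho>))"
        by (intro mult_left_mono sum_powr_abs_diff_le \<rho>) (use p r in auto)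
      finally show "(\<Sum>j<N. cmod (fchar_sub_one_term \<alpha> p s j)) \<le> (4 * r * p / (1 - \<rho>)) * \<bar>s\<bar> powr \<alpha>"
        by (simp add: mult_ac)
    qed
  qed
  finally show "cmod (fchar \<alpha> p s - 1) \<le> (4 * r * p / (1 - \<rho>)) * \<bar>s\<bar> powr \<alpha>" .
qed

lemma fchar_sub_one_le_linear:
  assumes p: "0 < p" "p < 1" and a: "1 < \<alpha>"
  obtains K where "\<And>s. cmod (fchar \<alpha> p s - 1) \<le> K * \<bar>s\<bar>"
proof
  define r where "r = rr p"
  have r: "r > 1" using rr_gt_one[OF p] by (simp add: r_def)
  define \<rho> where "\<rho> = r powr (1/\<alpha> - 1)"
  have \<rho>: "0 < \<rho>" "\<rho> < 1" using r a unfolding \<rho>_def by (auto intro: powr_less_one simp: field_simps)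
  fix s :: real
  have "cmod (fchar_sub_one_term \<alpha> p s j) \<le> (p * \<bar>s\<bar> * r powr (1/\<alpha>)) * \<rho> ^ j" for j
  proof -
    have "cmod (fchar_sub_one_term \<alpha> p s j) \<le> p * (\<bar>s\<bar> * r powr (real (j + 1) / \<alpha>)) * (1 / r) ^ j"
      using norm_fchar_sub_one_term_le[OF p, of \<alpha> s j] p r unfolding r_def
      by (smt (verit) min.cobounded2 mult_left_mono mult_right_mono zero_le_divide_1_iff zero_le_power)
    also have "r powr (real (j + 1) / \<alpha>) * (1 / r) ^ j = r powr (1/\<alpha>) * \<rho> ^ j"
    proof -
      have "\<rho> ^ j = r powr ((1/\<alpha> - 1) * real j)"
        using r by (simp add: \<rho>_def powr_realpow[symmetric] powr_powr flip: powr_power)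
      moreover have "(1 / r) ^ j = r powr (- real j)"
        using r by (simp add: powr_minus powr_realpow divide_inverse power_inverse)
      ultimately show ?thesis
        using r by (simp add: powr_add[symmetric] add_divide_distrib algebra_simps diff_divide_distrib)
    qed
    ultimately show ?thesis by (simp add: mult_ac)
  qed
  then have "cmod (\<Sum>j. fchar_sub_one_term \<alpha> p s j) \<le> (p * \<bar>s\<bar> * r powr (1/\<alpha>)) / (1 - \<rho>)"
    using \<rho> by (intro norm_suminf_le_geometric) auto
  then show "cmod (fchar \<alpha> p s - 1) \<le> p * r powr (1/\<alpha>) / (1 - \<rho>) * \<bar>s\<bar>"
    using fchar_sub_one_eq_suminf(2)[OF p] by (simp add: field_simps)
qed

lemma sq_div_powr_mult_powr_eq:
  fixes r g M t \<alpha> :: real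
  assumes r: "r > 0" and g: "g > 0"
  shows "(t / (r powr ((M + real j) / \<alpha>) * g powr (1 / \<alpha>)))\<^sup>2 * (g * r powr (M + real j))
       = t\<^sup>2 * (g * r powr M) powr (1 - 2/\<alpha>) * (r powr (1 - 2/\<alpha>)) ^ j"
proof -
  have "(t / (r powr ((M + real j) / \<alpha>) * g powr (1 / \<alpha>)))\<^sup>2 * (g * r powr (M + real j))
      = t\<^sup>2 * (g / g powr (2 / \<alpha>)) * (r powr (M + real j) / r powr (2 * (M + real j) / \<alpha>))"
    using r g by (simp add: power_divide power_mult_distrib powr_power mult_ac)
  also have "\<dots> = t\<^sup>2 * g powr (1 - 2/\<alpha>) * r powr ((M + real j) - 2 * (M + real j) / \<alpha>)"
    using r g by (simp add: powr_diff)
  also have "\<dots> = t\<^sup>2 * (g * r powr M) powr (1 - 2/\<alpha>) * (r powr (1 - 2/\<alpha>)) ^ j"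
    using r g by (simp add: powr_mult powr_powr powr_power powr_add[symmetric] algebra_simps
        diff_divide_distrib add_divide_distrib)
  finally show ?thesis .
qed

lemma R12_le:
  assumes p: "0 < p" "p < 1" and a: "0 < \<alpha>" "\<alpha> < 2"
  obtains K where "K \<ge> 0"
    "\<And>n t. n \<ge> 1 \<Longrightarrow> cmod (R12 \<alpha> p n t) \<le> K * t\<^sup>2 * real n powr (1 - 2/\<alpha>)"
proof
  define r where "r = rr p"
  have r: "r > 1" using rr_gt_one[OF p] by (simp add: r_def)
  then have r0: "r > 0" by simp
  have q: "qq p > 0" using p by (simp add: qq_def)
  define \<rho> where "\<rho> = r powr (1 - 2/\<alpha>)"
  have \<rho>: "0 < \<rho>" "\<rho> < 1" using r a unfolding \<rho>_def by (auto intro: powr_less_one simp: field_simps)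
  show "p / (2 * qq p * (1 - \<rho>)) \<ge> 0" using p q \<rho> by simp
  fix n :: nat and t :: real
  assume n: "n \<ge> 1"
  define M where "M = real_of_int (Mn p n)"
  define g where "g = gam p n"
  have g: "g > 0" using n r unfolding g_def gam_def r_def by simp
  have gn: "g * r powr M = real n" unfolding g_def gam_def M_def r_def using r by (simp add: r_def)
  define C where "C = p / (2 * qq p) * t\<^sup>2 * real n powr (1 - 2/\<alpha>)"
  define f where "f = (\<lambda>j. (let m = real_of_int (Mn p n) + real j;
                  u = t / (rr p powr (m / \<alpha>) * gam p n powr (1 / \<alpha>))
              in (exp (\<i> * complex_of_real u) - 1 - \<i> * complex_of_real u)
                 * complex_of_real (p * gam p n / qq p * rr p powr m)))"
  have "cmod (f j) \<le> C * \<rho> ^ j" for j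
  proof -
    define u where "u = t / (r powr ((M + real j) / \<alpha>) * g powr (1 / \<alpha>))"
    have "cmod (f j) = cmod (exp (\<i> * complex_of_real u) - 1 - \<i> * complex_of_real u)
                       * (p * g / qq p * r powr (M + real j))"
      using p q g unfolding f_def Let_def u_def M_def g_def r_def
      by (simp only: norm_mult norm_of_real) simp
    also have "\<dots> \<le> u\<^sup>2 / 2 * (p * g / qq p * r powr (M + real j))"
      by (intro mult_right_mono norm_iexp_sub_one_sub_le) (use p q g in auto)
    also have "\<dots> = p / (2 * qq p) * (u\<^sup>2 * (g * r powr (M + real j)))" by (simp add: field_simps)
    also have "\<dots> = C * \<rho> ^ j"
      unfolding u_def sq_div_powr_mult_powr_eq[OF r0 g] gn C_def \<rho>_def by (simp only: mult.assoc)
    finally show ?thesis .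
  qed
  then have "cmod (suminf f) \<le> C / (1 - \<rho>)"
    using \<rho> by (intro norm_suminf_le_geometric) auto
  moreover have "cmod (R12 \<alpha> p n t) = cmod (suminf f)"
    unfolding R12_def f_def by (simp only: norm_minus_cancel)
  moreover have "C / (1 - \<rho>) = p / (2 * qq p * (1 - \<rho>)) * t\<^sup>2 * real n powr (1 - 2/\<alpha>)"
    by (simp add: C_def)
  ultimately show "cmod (R12 \<alpha> p n t) \<le> p / (2 * qq p * (1 - \<rho>)) * t\<^sup>2 * real n powr (1 - 2/\<alpha>)"
    by simp
qed

lemma norm_log_remainder_series_le:
  fixes x :: complex
  assumes n: "n \<ge> 1" and x: "cmod x \<le> real n / 2"
  shows "cmod (\<Sum>j. complex_of_real ((-1) ^ (j + 3) / real (j + 2)) * x ^ (j + 2) / of_nat n ^ (j + 1))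
         \<le> 2 * cmod x ^ 2 / real n"
proof -
  have nn: "real n > 0" using n by simp
  have "cmod (complex_of_real ((-1) ^ (j + 3) / real (j + 2)) * x ^ (j + 2) / of_nat n ^ (j + 1))
        \<le> cmod x ^ 2 / real n * (1/2) ^ j" for j
  proof -
    have "cmod (complex_of_real ((-1) ^ (j + 3) / real (j + 2)) * x ^ (j + 2) / of_nat n ^ (j + 1))
        = 1 / real (j + 2) * (cmod x ^ (j + 2) / real n ^ (j + 1))"
      using norm_of_nat[of "j+2", where 'a=complex]
      by (simp add: norm_mult norm_divide norm_power add.commute)
    also have "\<dots> \<le> cmod x ^ (j + 2) / real n ^ (j + 1)"
      by (intro mult_left_le_one_le) auto
    also have "\<dots> = cmod x ^ 2 / real n * (cmod x / real n) ^ j"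
      using nn by (simp add: power_add power_divide field_simps power2_eq_square)
    also have "\<dots> \<le> cmod x ^ 2 / real n * (1/2) ^ j"
      using nn x by (intro mult_left_mono power_mono) (auto simp: field_simps)
    finally show ?thesis .
  qed
  then have "cmod (\<Sum>j. complex_of_real ((-1) ^ (j + 3) / real (j + 2)) * x ^ (j + 2) / of_nat n ^ (j + 1))
         \<le> cmod x ^ 2 / real n / (1 - 1/2)"
    by (rule norm_suminf_le_geometric(2)) auto
  also have "cmod x ^ 2 / real n / (1 - 1/2) = 2 * cmod x ^ 2 / real n" by simp
  finally show ?thesis .
qed

lemma norm_R32_le:
  assumes "n \<ge> 1" "cmod (xn \<alpha> p n t) / real n \<le> 1 / 2"
  shows "cmod (R32 \<alpha> p n t) \<le> 2 * real n * cmod (fchar \<alpha> p (t / real n powr (1 / \<alpha>)) - 1) ^ 2"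
proof -
  have "cmod (R32 \<alpha> p n t) \<le> 2 * cmod (xn \<alpha> p n t) ^ 2 / real n"
    unfolding R32_def using assms by (intro norm_log_remainder_series_le) (auto simp: field_simps)
  also have "cmod (xn \<alpha> p n t) = real n * cmod (fchar \<alpha> p (t / real n powr (1 / \<alpha>)) - 1)"
    using assms by (simp add: xn_def norm_mult)
  finally show ?thesis
    using assms(1) by (simp add: power2_eq_square mult_ac)
qed

lemma powr_add_mult_powr_le:
  fixes t \<epsilon> x \<alpha> \<beta> \<gamma> :: real
  assumes t: "\<bar>t\<bar> \<le> \<epsilon> * x powr (1 / \<alpha>)" and "0 < \<alpha>" "0 \<le> \<beta>" "0 < x" "0 \<le> \<epsilon>"
  shows "\<bar>t\<bar> powr (\<gamma> + \<beta>) * x powr (- \<beta> / \<alpha>) \<le> \<epsilon> powr \<beta> * \<bar>t\<bar> powr \<gamma>"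
proof -
  have "\<bar>t\<bar> powr \<beta> \<le> (\<epsilon> * x powr (1 / \<alpha>)) powr \<beta>"
    using t assms by (intro powr_mono2) auto
  also have "\<dots> = \<epsilon> powr \<beta> * x powr (\<beta> / \<alpha>)"
    by (simp add: powr_mult powr_powr)
  finally have "\<bar>t\<bar> powr \<beta> * x powr (- \<beta> / \<alpha>) \<le> (\<epsilon> powr \<beta> * x powr (\<beta> / \<alpha>)) * x powr (- \<beta> / \<alpha>)"
    by (rule mult_right_mono) simp
  also have "\<dots> = \<epsilon> powr \<beta> * (x powr (\<beta> / \<alpha>) * x powr (- \<beta> / \<alpha>))"
    by (simp only: mult.assoc)
  also have "x powr (\<beta> / \<alpha>) * x powr (- \<beta> / \<alpha>) = 1"
    using assms by (simp add: powr_add[symmetric])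
  finally have "\<bar>t\<bar> powr \<gamma> * (\<bar>t\<bar> powr \<beta> * x powr (- \<beta> / \<alpha>)) \<le> \<bar>t\<bar> powr \<gamma> * \<epsilon> powr \<beta>"
    by (simp add: mult_left_mono)
  then show ?thesis
    by (simp add: powr_add mult_ac)
qed

lemma exists_small_powr:
  fixes c \<gamma> C :: real
  assumes "c > 0" "\<gamma> > 0" "C > 0"
  obtains \<epsilon> where "0 < \<epsilon>" "\<epsilon> \<le> C" "\<epsilon> \<le> 1" "\<epsilon> powr \<gamma> \<le> c"
proof
  define \<epsilon> where "\<epsilon> = min C (min 1 (c powr (1 / \<gamma>)))"
  show "0 < \<epsilon>" "\<epsilon> \<le> C" "\<epsilon> \<le> 1" using assms by (auto simp: \<epsilon>_def)
  have "\<epsilon> powr \<gamma> \<le> (c powr (1 / \<gamma>)) powr \<gamma>"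
    using assms by (intro powr_mono2) (auto simp: \<epsilon>_def)
  also have "\<dots> = c" using assms by (simp add: powr_powr)
  finally show "\<epsilon> powr \<gamma> \<le> c" .
qed

lemma power_powr_nonneg: "0 \<le> a \<Longrightarrow> l \<noteq> 0 \<Longrightarrow> (a powr b) ^ l = a powr (real l * b)" for a b :: real
  by (cases "a = 0") (auto simp: powr_power)

lemma norm_R2_le:
  assumes w: "cmod (R12 \<alpha> p n t) + cmod (R32 \<alpha> p n t) \<le> K * b"
    and b: "b \<le> c * \<bar>t\<bar> powr \<alpha>" and c: "c \<le> C1 / (2 * K)" and K: "K > 0"
  shows "cmod (R2 \<alpha> p n l t) \<le> (K * b) ^ l * exp (C1 * \<bar>t\<bar> powr \<alpha> / 2)"
proof -
  let ?z = "R12 \<alpha> p n t + R32 \<alpha> p n t"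
  have z: "cmod ?z \<le> K * b"
    using norm_triangle_ineq[of "R12 \<alpha> p n t" "R32 \<alpha> p n t"] w by linarith
  then have "0 \<le> K * b" using norm_ge_zero order_trans by blast
  have "K * b \<le> K * (C1 / (2 * K) * \<bar>t\<bar> powr \<alpha>)"
    using b c K by (intro mult_left_mono order.trans[OF b] mult_right_mono) auto
  also have "\<dots> = C1 * \<bar>t\<bar> powr \<alpha> / 2" using K by simp
  finally have "cmod ?z \<le> C1 * \<bar>t\<bar> powr \<alpha> / 2" using z by linarith
  have "cmod (R2 \<alpha> p n l t) \<le> cmod ?z ^ l * exp (cmod ?z)"
    unfolding R2_def by (rule norm_exp_series_tail_le)
  also have "\<dots> \<le> (K * b) ^ l * exp (C1 * \<bar>t\<bar> powr \<alpha> / 2)"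
    using z \<open>0 \<le> K * b\<close> \<open>cmod ?z \<le> C1 * \<bar>t\<bar> powr \<alpha> / 2\<close>
    by (intro mult_mono power_mono) auto
  finally show ?thesis .
qed

lemma norm_R12_add_R32_le_small_alpha:
  assumes a: "0 < \<alpha>" "\<alpha> < 1" and n: "n \<ge> 1" and t: "\<bar>t\<bar> \<le> real n powr (1 / \<alpha>)"
    and K1: "\<And>s. cmod (fchar \<alpha> p s - 1) \<le> K1 * \<bar>s\<bar> powr \<alpha>"
    and K2: "K2 \<ge> 0" "cmod (R12 \<alpha> p n t) \<le> K2 * t\<^sup>2 * real n powr (1 - 2/\<alpha>)"
    and xn: "cmod (xn \<alpha> p n t) / real n \<le> 1 / 2"
  shows "cmod (R12 \<alpha> p n t) + cmod (R32 \<alpha> p n t) \<le> (2 * K1\<^sup>2 + K2) * (\<bar>t\<bar> powr (2 * \<alpha>) / real n)"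
proof -
  have nn: "real n > 0" using n by simp
  have s: "\<bar>t / real n powr (1 / \<alpha>)\<bar> powr \<alpha> = \<bar>t\<bar> powr \<alpha> / real n"
    using nn a by (simp add: powr_divide powr_powr)
  have "cmod (R32 \<alpha> p n t) \<le> 2 * real n * cmod (fchar \<alpha> p (t / real n powr (1 / \<alpha>)) - 1) ^ 2"
    by (rule norm_R32_le[OF n xn])
  also have "\<dots> \<le> 2 * real n * (K1 * (\<bar>t\<bar> powr \<alpha> / real n)) ^ 2"
    using K1[of "t / real n powr (1 / \<alpha>)"] nn unfolding s by (intro mult_left_mono power_mono) auto
  also have "\<dots> = 2 * K1\<^sup>2 * (\<bar>t\<bar> powr (2 * \<alpha>) / real n)"
    using nn by (simp add: power_divide powr_add[symmetric] power2_eq_square)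
  finally have R32: "cmod (R32 \<alpha> p n t) \<le> 2 * K1\<^sup>2 * (\<bar>t\<bar> powr (2 * \<alpha>) / real n)" .
  have "\<bar>t\<bar> powr (2 * \<alpha> + (2 - 2 * \<alpha>)) * real n powr (- (2 - 2 * \<alpha>) / \<alpha>)
          \<le> 1 powr (2 - 2 * \<alpha>) * \<bar>t\<bar> powr (2 * \<alpha>)"
    using t a nn by (intro powr_add_mult_powr_le) auto
  then have "t\<^sup>2 * real n powr (- (2 - 2 * \<alpha>) / \<alpha>) \<le> \<bar>t\<bar> powr (2 * \<alpha>)"
    by simp
  moreover have "real n powr (1 - 2/\<alpha>) = real n powr (- (2 - 2 * \<alpha>) / \<alpha>) / real n"
  proof -
    have e: "- (2 - 2 * \<alpha>) / \<alpha> = (1 - 2/\<alpha>) + 1" using a by (simp add: field_simps)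
    have "real n powr (- (2 - 2 * \<alpha>) / \<alpha>) = real n powr (1 - 2/\<alpha>) * real n"
      unfolding e powr_add using nn by simp
    then show ?thesis using nn by simp
  qed
  ultimately have "t\<^sup>2 * real n powr (1 - 2/\<alpha>) \<le> \<bar>t\<bar> powr (2 * \<alpha>) / real n"
    using nn by (simp add: divide_right_mono)
  then have "K2 * (t\<^sup>2 * real n powr (1 - 2/\<alpha>)) \<le> K2 * (\<bar>t\<bar> powr (2 * \<alpha>) / real n)"
    using K2(1) by (rule mult_left_mono)
  then have "cmod (R12 \<alpha> p n t) \<le> K2 * (\<bar>t\<bar> powr (2 * \<alpha>) / real n)"
    using K2(2) by (simp only: mult.assoc)
  with R32 show ?thesis
    using distrib_right[of "2 * K1\<^sup>2" K2 "\<bar>t\<bar> powr (2 * \<alpha>) / real n"] by linarith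
qed

lemma R2_bound_small_alpha:
  fixes l :: nat and \<alpha> p C1 C2 :: real
  assumes l: "l \<ge> 1" and a: "0 < \<alpha>" "\<alpha> < 1" and p: "0 < p" "p < 1"
    and C1: "C1 > 0" and C2pos: "C2 > 0"
    and C2: "\<And>n t. n \<ge> 1 \<Longrightarrow> \<bar>t\<bar> \<le> C2 * real n powr (1 / \<alpha>) \<Longrightarrow>
               cmod (xn \<alpha> p n t) / real n \<le> 1 / 2"
  shows "\<exists>C4 > 0. \<exists>\<epsilon>. 0 < \<epsilon> \<and> \<epsilon> \<le> C2 \<and>
           (\<forall>n t. n \<ge> 1 \<longrightarrow> \<bar>t\<bar> \<le> \<epsilon> * real n powr (1 / \<alpha>) \<longrightarrow>
              cmod (R2 \<alpha> p n l t) \<le> C4 * \<bar>t\<bar> powr (2 * real l * \<alpha>)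
                 * exp (C1 * \<bar>t\<bar> powr \<alpha> / 2) * real n powr (- real l))"
proof -
  obtain K1 where K1: "\<And>s. cmod (fchar \<alpha> p s - 1) \<le> K1 * \<bar>s\<bar> powr \<alpha>"
    using fchar_sub_one_le_powr[OF p a] by blast
  obtain K2 where K2: "K2 \<ge> 0"
    "\<And>n t. n \<ge> 1 \<Longrightarrow> cmod (R12 \<alpha> p n t) \<le> K2 * t\<^sup>2 * real n powr (1 - 2/\<alpha>)"
    using R12_le[OF p a(1)] a(2) by auto
  define K where "K = 2 * K1\<^sup>2 + K2 + 1"
  have K: "K > 0" using K2 by (simp add: K_def add_nonneg_pos)
  obtain \<epsilon> where \<epsilon>: "0 < \<epsilon>" "\<epsilon> \<le> C2" "\<epsilon> \<le> 1" "\<epsilon> powr \<alpha> \<le> C1 / (2 * K)"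
    using exists_small_powr[of "C1 / (2 * K)" \<alpha> C2] C1 K a C2pos by auto
  show ?thesis
  proof (rule exI[of _ "K ^ l"], intro conjI exI[of _ \<epsilon>] allI impI)
    show "K ^ l > 0" "0 < \<epsilon>" "\<epsilon> \<le> C2" using K \<epsilon> by auto
    fix n :: nat and t :: real
    assume n: "n \<ge> 1" and t: "\<bar>t\<bar> \<le> \<epsilon> * real n powr (1 / \<alpha>)"
    have nn: "real n > 0" using n by simp
    define b where "b = \<bar>t\<bar> powr (2 * \<alpha>) / real n"
    have "\<bar>t\<bar> \<le> C2 * real n powr (1 / \<alpha>)" "\<bar>t\<bar> \<le> 1 * real n powr (1 / \<alpha>)"
      using t \<epsilon>(2,3) by (meson mult_right_mono order_trans powr_ge_zero)+
    then have "cmod (R12 \<alpha> p n t) + cmod (R32 \<alpha> p n t) \<le> (2 * K1\<^sup>2 + K2) * b"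
      unfolding b_def using a n K1 K2 C2 by (intro norm_R12_add_R32_le_small_alpha) auto
    moreover have "(2 * K1\<^sup>2 + K2) * b \<le> K * b"
      unfolding K_def b_def by (intro mult_right_mono) auto
    ultimately have sum: "cmod (R12 \<alpha> p n t) + cmod (R32 \<alpha> p n t) \<le> K * b"
      by linarith
    have "b = \<bar>t\<bar> powr (\<alpha> + \<alpha>) * real n powr (- \<alpha> / \<alpha>)"
    proof -
      have "\<alpha> + \<alpha> = 2 * \<alpha>" "- \<alpha> / \<alpha> = - 1" using a by simp_all
      then show ?thesis using nn by (simp add: b_def powr_minus_divide)
    qed
    also have "\<dots> \<le> \<epsilon> powr \<alpha> * \<bar>t\<bar> powr \<alpha>"
      using \<epsilon>(1) nn a by (intro powr_add_mult_powr_le[OF t]) auto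
    finally have "cmod (R2 \<alpha> p n l t) \<le> (K * b) ^ l * exp (C1 * \<bar>t\<bar> powr \<alpha> / 2)"
      using sum \<epsilon>(4) K by (intro norm_R2_le)
    also have "(K * b) ^ l = K ^ l * \<bar>t\<bar> powr (2 * real l * \<alpha>) * real n powr (- real l)"
    proof -
      have "(\<bar>t\<bar> powr (2 * \<alpha>)) ^ l = \<bar>t\<bar> powr (2 * real l * \<alpha>)"
        using l by (simp add: power_powr_nonneg mult_ac)
      moreover have "real n ^ l = real n powr real l" using nn by (simp add: powr_realpow)
      ultimately show ?thesis
        by (simp add: b_def power_mult_distrib power_divide powr_minus divide_inverse power_inverse)
    qed
    finally show "cmod (R2 \<alpha> p n l t) \<le> K ^ l * \<bar>t\<bar> powr (2 * real l * \<alpha>)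
                 * exp (C1 * \<bar>t\<bar> powr \<alpha> / 2) * real n powr (- real l)"
      by (simp add: mult_ac)
  qed
qed

lemma norm_R12_add_R32_le_large_alpha:
  assumes n: "n \<ge> 1"
    and K1: "\<And>s. cmod (fchar \<alpha> p s - 1) \<le> K1 * \<bar>s\<bar>"
    and K2: "cmod (R12 \<alpha> p n t) \<le> K2 * t\<^sup>2 * real n powr (1 - 2/\<alpha>)"
    and xn: "cmod (xn \<alpha> p n t) / real n \<le> 1 / 2"
  shows "cmod (R12 \<alpha> p n t) + cmod (R32 \<alpha> p n t) \<le> (2 * K1\<^sup>2 + K2) * (t\<^sup>2 * real n powr (1 - 2/\<alpha>))"
proof -
  have nn: "real n > 0" using n by simp
  have "cmod (R32 \<alpha> p n t) \<le> 2 * real n * cmod (fchar \<alpha> p (t / real n powr (1 / \<alpha>)) - 1) ^ 2"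
    by (rule norm_R32_le[OF n xn])
  also have "\<dots> \<le> 2 * real n * (K1 * \<bar>t / real n powr (1 / \<alpha>)\<bar>) ^ 2"
    using K1[of "t / real n powr (1 / \<alpha>)"] nn by (intro mult_left_mono power_mono) auto
  also have "\<dots> = 2 * K1\<^sup>2 * t\<^sup>2 * (real n / (real n powr (1 / \<alpha>))\<^sup>2)"
    by (simp add: power_mult_distrib power_divide)
  also have "real n / (real n powr (1 / \<alpha>))\<^sup>2 = real n powr (1 - 2/\<alpha>)"
    using nn by (simp add: power2_eq_square powr_add[symmetric] powr_diff)
  finally show ?thesis using K2 by (simp add: distrib_right mult.assoc)
qed

lemma R2_bound_large_alpha:
  fixes l :: nat and \<alpha> p C1 C2 :: real
  assumes l: "l \<ge> 1" and a: "1 < \<alpha>" "\<alpha> < 2" and p: "0 < p" "p < 1"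
    and C1: "C1 > 0" and C2pos: "C2 > 0"
    and C2: "\<And>n t. n \<ge> 1 \<Longrightarrow> \<bar>t\<bar> \<le> C2 * real n powr (1 / \<alpha>) \<Longrightarrow>
               cmod (xn \<alpha> p n t) / real n \<le> 1 / 2"
  shows "\<exists>C4 > 0. \<exists>\<epsilon>. 0 < \<epsilon> \<and> \<epsilon> \<le> C2 \<and>
           (\<forall>n t. n \<ge> 1 \<longrightarrow> \<bar>t\<bar> \<le> \<epsilon> * real n powr (1 / \<alpha>) \<longrightarrow>
              cmod (R2 \<alpha> p n l t) \<le> C4 * \<bar>t\<bar> powr (2 * real l)
                 * exp (C1 * \<bar>t\<bar> powr \<alpha> / 2) * real n powr (- real l * (2 - \<alpha>) / \<alpha>))"
proof -
  obtain K1 where K1: "\<And>s. cmod (fchar \<alpha> p s - 1) \<le> K1 * \<bar>s\<bar>"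
    using fchar_sub_one_le_linear[OF p a(1)] by blast
  obtain K2 where K2: "K2 \<ge> 0"
    "\<And>n t. n \<ge> 1 \<Longrightarrow> cmod (R12 \<alpha> p n t) \<le> K2 * t\<^sup>2 * real n powr (1 - 2/\<alpha>)"
    using R12_le[OF p _ a(2)] a(1) by auto
  define K where "K = 2 * K1\<^sup>2 + K2 + 1"
  have K: "K > 0" using K2 by (simp add: K_def add_nonneg_pos)
  obtain \<epsilon> where \<epsilon>: "0 < \<epsilon>" "\<epsilon> \<le> C2" "\<epsilon> powr (2 - \<alpha>) \<le> C1 / (2 * K)"
    using exists_small_powr[of "C1 / (2 * K)" "2 - \<alpha>" C2] C1 K a C2pos by auto
  show ?thesis
  proof (rule exI[of _ "K ^ l"], intro conjI exI[of _ \<epsilon>] allI impI)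
    show "K ^ l > 0" "0 < \<epsilon>" "\<epsilon> \<le> C2" using K \<epsilon> by auto
    fix n :: nat and t :: real
    assume n: "n \<ge> 1" and t: "\<bar>t\<bar> \<le> \<epsilon> * real n powr (1 / \<alpha>)"
    have nn: "real n > 0" using n by simp
    define b where "b = t\<^sup>2 * real n powr (1 - 2/\<alpha>)"
    have "\<bar>t\<bar> \<le> C2 * real n powr (1 / \<alpha>)"
      using t \<epsilon>(2) by (meson mult_right_mono order_trans powr_ge_zero)
    then have "cmod (R12 \<alpha> p n t) + cmod (R32 \<alpha> p n t) \<le> (2 * K1\<^sup>2 + K2) * b"
      unfolding b_def using n K1 K2 C2 by (intro norm_R12_add_R32_le_large_alpha) auto
    moreover have "(2 * K1\<^sup>2 + K2) * b \<le> K * b"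
      unfolding K_def b_def by (intro mult_right_mono) auto
    ultimately have sum: "cmod (R12 \<alpha> p n t) + cmod (R32 \<alpha> p n t) \<le> K * b"
      by linarith
    have "b = \<bar>t\<bar> powr (\<alpha> + (2 - \<alpha>)) * real n powr (- (2 - \<alpha>) / \<alpha>)"
    proof -
      have "- (2 - \<alpha>) / \<alpha> = 1 - 2/\<alpha>" using a by (simp add: field_simps)
      then show ?thesis by (simp add: b_def)
    qed
    also have "\<dots> \<le> \<epsilon> powr (2 - \<alpha>) * \<bar>t\<bar> powr \<alpha>"
      using \<epsilon>(1) nn a by (intro powr_add_mult_powr_le[OF t]) auto
    finally have "cmod (R2 \<alpha> p n l t) \<le> (K * b) ^ l * exp (C1 * \<bar>t\<bar> powr \<alpha> / 2)"
      using sum \<epsilon>(3) K by (intro norm_R2_le)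
    also have "(K * b) ^ l = K ^ l * \<bar>t\<bar> powr (2 * real l) * real n powr (- real l * (2 - \<alpha>) / \<alpha>)"
    proof -
      have "(t\<^sup>2) ^ l = \<bar>t\<bar> powr (2 * real l)"
        using l power_powr_nonneg[of "\<bar>t\<bar>" l 2] by (simp add: mult_ac)
      moreover have "(real n powr (1 - 2/\<alpha>)) ^ l = real n powr (- real l * (2 - \<alpha>) / \<alpha>)"
        using l a power_powr_nonneg[of "real n" l "1 - 2/\<alpha>"] by (simp add: field_simps)
      ultimately show ?thesis
        by (simp add: b_def power_mult_distrib)
    qed
    finally show "cmod (R2 \<alpha> p n l t) \<le> K ^ l * \<bar>t\<bar> powr (2 * real l)
                 * exp (C1 * \<bar>t\<bar> powr \<alpha> / 2) * real n powr (- real l * (2 - \<alpha>) / \<alpha>)"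
      by (simp add: mult_ac)
  qed
qed

theorem lemma6:
  fixes l :: nat and alpha p C1 C2 :: real
  assumes l: "l \<ge> 1"
    and alpha: "(0 < alpha \<and> alpha < 1) \<or> (1 < alpha \<and> alpha < 2)"
    and p: "0 < p" "p < 1"
    and C1pos: "C1 > 0"
    and C1: "\<And>g t. qq p < g \<Longrightarrow> g \<le> 1 \<Longrightarrow>
               Re (ygam alpha p g t) \<le> - C1 * \<bar>t\<bar> powr alpha \<and>
               cmod (ygam alpha p g t) \<le> C1 * \<bar>t\<bar> powr alpha"
    and C2pos: "C2 > 0"
    and C2: "\<And>n t. n \<ge> 1 \<Longrightarrow> \<bar>t\<bar> \<le> C2 * real n powr (1 / alpha) \<Longrightarrow>
               cmod (xn alpha p n t) / real n \<le> 1 / 2"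
  shows "\<exists>C4 > 0. \<exists>\<epsilon>. 0 < \<epsilon> \<and> \<epsilon> \<le> C2 \<and>
           (\<forall>n t. n \<ge> 1 \<longrightarrow> \<bar>t\<bar> \<le> \<epsilon> * real n powr (1 / alpha) \<longrightarrow>
              cmod (R2 alpha p n l t) \<le>
                (if alpha < 1
                 then C4 * \<bar>t\<bar> powr (2 * real l * alpha) * exp (C1 * \<bar>t\<bar> powr alpha / 2)
                        * real n powr (- real l)
                 else C4 * \<bar>t\<bar> powr (2 * real l) * exp (C1 * \<bar>t\<bar> powr alpha / 2)
                        * real n powr (- real l * (2 - alpha) / alpha)))"
proof (cases "alpha < 1")
  case True
  then have "0 < alpha" "alpha < 1" using alpha by auto
  from R2_bound_small_alpha[OF l this p C1pos C2pos C2] True show ?thesis by simp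
next
  case False
  then have "1 < alpha" "alpha < 2" using alpha by auto
  from R2_bound_large_alpha[OF l this p C1pos C2pos C2] False show ?thesis by simp
qed

end
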